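(* Let $A,B\in\mathbb{Z}$ satisfy $|A|\leq B$ and $2|A|\geq B+3$, and let $T$ be the tile defined below and $c(T)=-T$. Then $T\cap c(T)$ contains at least two points.
   Context: Let $a(x,y)=(x+1,y)$ and $c(x,y)=(-x,-y)$. Let $g(\mathbf{x})=\begin{pmatrix}0&-B\\1&-A\end{pmatrix}\mathbf{x}+\left(\frac{B-1}{2},0\right)^T$, $\mathcal{D}=\{id,a,\dots,a^{B-2},c\}$ (note $B\geq 3$ under the hypotheses), and let $T$ be the unique nonempty compact set with $g(T)=\bigcup_{\delta\in\mathcal{D}}\delta(T)$. *)

theory Defs
  imports "HOL-Analysis.Analysis"
begin

definition tr_a :: "real \<times> real \<Rightarrow> real \<times> real" where
  "tr_a = (\<lambda>(x, y). (x + 1, y))"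

definition rot_c :: "real \<times> real \<Rightarrow> real \<times> real" where
  "rot_c = (\<lambda>(x, y). (- x, - y))"

definition gmap :: "int \<Rightarrow> int \<Rightarrow> real \<times> real \<Rightarrow> real \<times> real" where
  "gmap A B = (\<lambda>(x, y). (- real_of_int B * y + (real_of_int B - 1) / 2,
                         x - real_of_int A * y))"

definition digits :: "int \<Rightarrow> (real \<times> real \<Rightarrow> real \<times> real) set" where
  "digits B = {tr_a ^^ k | k. k \<le> nat (B - 2)} \<union> {rot_c}"

definition is_tile :: "int \<Rightarrow> int \<Rightarrow> (real \<times> real) set \<Rightarrow> bool" where
  "is_tile A B T \<longleftrightarrow> T \<noteq> {} \<and> compact T \<and>
     gmap A B ` T = (\<Union>\<delta>\<in>digits B. \<delta> ` T)"

end

theory Submission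
  imports Defs
begin

text \<open>Every \<open>\<delta>\<in>D\<close> satisfies \<open>\<delta>(T) \<subseteq> g(T)\<close>, so the affine map \<open>g\<^sup>-\<^sup>1 \<circ> \<delta>\<close> sends \<open>T\<close> into
  itself. Its linear part is \<open>\<plusminus>M\<^sup>-\<^sup>1\<close>, where \<open>M\<close> is the linear part of \<open>g\<close>; the eigenvalues of \<open>M\<close>
  are the roots of \<open>\<lambda>\<^sup>2 + A\<lambda> + B\<close>, which lie outside the unit circle when \<open>|A| \<le> B\<close> and
  \<open>B \<ge> 3\<close>. Hence \<open>g\<^sup>-\<^sup>1 \<circ> \<delta>\<close> is eventually contracting, its iterates converge to its fixed
  point, and since \<open>T\<close> is closed every solution of \<open>g(p) = \<delta>(p)\<close> lies in \<open>T\<close>.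
  For \<open>B \<ge> 4\<close> the solutions of \<open>g(p) = a(p)\<close> and \<open>g(q) = a\<^sup>B\<^sup>-\<^sup>2(q)\<close> satisfy \<open>q = -p \<noteq> 0\<close>.
  For \<open>B = 3\<close>, i.e. \<open>A = \<plusminus>3\<close>, one follows such fixed points back through a few preimages
  \<open>g\<^sup>-\<^sup>1(\<delta>(p))\<close> to reach a pair \<open>\<plusminus>p\<close>.\<close>

lemma tr_a_pow: "(tr_a ^^ k) u = u + (real k, 0)"
  by (induction k arbitrary: u) (auto simp: tr_a_def zero_prod_def split: prod.splits)

lemma rot_c_eq_uminus: "rot_c u = - u"
  by (cases u) (simp add: rot_c_def)

lemma tr_a_pow_in_digits: "k \<le> nat (B - 2) \<Longrightarrow> tr_a ^^ k \<in> digits B"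
  unfolding digits_def by blast

lemma rot_c_in_digits: "rot_c \<in> digits B"
  unfolding digits_def by blast

lemma digits_isometry:
  assumes "d \<in> digits B"
  obtains s :: real where "\<bar>s\<bar> = 1" and "\<And>u v. d u - d v = s *\<^sub>R (u - v)"
proof -
  consider k where "d = tr_a ^^ k" | "d = rot_c"
    using assms unfolding digits_def by blast
  then show ?thesis
  proof cases
    case 1
    then show ?thesis by (intro that[of 1]) (simp_all add: tr_a_pow)
  next
    case 2
    then show ?thesis by (intro that[of "-1"]) (simp_all add: rot_c_eq_uminus)
  qed
qed

definition gmap_linear :: "real \<Rightarrow> real \<Rightarrow> real \<times> real \<Rightarrow> real \<times> real" where
  "gmap_linear a b = (\<lambda>(x, y). (- b * y, x - a * y))"

lemma gmap_diff: "gmap A B u - gmap A B v = gmap_linear (of_int A) (of_int B) (u - v)"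
  by (cases u; cases v) (simp add: gmap_def gmap_linear_def algebra_simps)

lemma gmap_inj:
  assumes "B \<noteq> 0" and "gmap A B u = gmap A B v"
  shows "u = v"
proof -
  have "gmap_linear (of_int A) (of_int B) (u - v) = 0"
    using assms(2) by (simp flip: gmap_diff)
  then show ?thesis
    using assms(1) by (cases u; cases v) (auto simp: gmap_linear_def zero_prod_def)
qed

definition gmap_inv :: "int \<Rightarrow> int \<Rightarrow> real \<times> real \<Rightarrow> real \<times> real" where
  "gmap_inv A B = (\<lambda>(x, y). let t = ((of_int B - 1) / 2 - x) / of_int B in (y + of_int A * t, t))"

lemma gmap_gmap_inv: "B \<noteq> 0 \<Longrightarrow> gmap A B (gmap_inv A B v) = v"
  by (cases v) (simp add: gmap_def gmap_inv_def Let_def field_simps)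

section \<open>Backward orbits of \<open>M\<close> tend to zero\<close>

lemma abs_eq_1_mult_cancel:
  fixes s t :: real
  shows "\<bar>s\<bar> = 1 \<Longrightarrow> s * (s * t) = t"
  by (metis abs_mult_self_eq mult.assoc mult_1)

lemma tendsto_zero_if_square_le:
  fixes v w :: "nat \<Rightarrow> real"
  assumes "\<And>n. (v n)\<^sup>2 \<le> w n" and "w \<longlonglongrightarrow> 0"
  shows "v \<longlonglongrightarrow> 0"
proof (rule Lim_null_comparison)
  show "\<forall>\<^sub>F n in sequentially. norm (v n) \<le> sqrt (w n)"
  proof (intro always_eventually allI)
    fix n
    have "sqrt ((v n)\<^sup>2) \<le> sqrt (w n)"
      using assms(1) by (rule real_sqrt_le_mono)
    then show "norm (v n) \<le> sqrt (w n)"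
      by simp
  qed
  show "(\<lambda>n. sqrt (w n)) \<longlonglongrightarrow> 0"
    using tendsto_real_sqrt[OF assms(2)] by simp
qed

text \<open>Complex eigenvalues: the quadratic form \<open>Q = x\<^sup>2 - axy + by\<^sup>2\<close> satisfies \<open>Q(Mv) = b Q(v)\<close>,
  and it is positive definite.\<close>

lemma gmap_linear_backward_orbit_tendsto_zero_complex:
  fixes a b :: real and x y s :: "nat \<Rightarrow> real"
  assumes b: "b > 1" and disc: "a\<^sup>2 < 4 * b" and s: "\<And>n. \<bar>s n\<bar> = 1"
    and hx: "\<And>n. x n = - s n * b * y (Suc n)"
    and hy: "\<And>n. y n = s n * (x (Suc n) - a * y (Suc n))"
  shows "x \<longlonglongrightarrow> 0 \<and> y \<longlonglongrightarrow> 0"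
proof -
  define Q where "Q n = (x n)\<^sup>2 - a * x n * y n + b * (y n)\<^sup>2" for n
  have Q_Suc: "Q n = b * Q (Suc n)" for n
    unfolding Q_def hx[of n] hy[of n]
    by (simp add: power2_eq_square algebra_simps abs_eq_1_mult_cancel[OF s])
  have Q_geom: "Q n = Q 0 * (1 / b) ^ n" for n
  proof (induction n)
    case (Suc n)
    then show ?case
      using Q_Suc[of n] b by (simp add: field_simps)
  qed simp
  have "(\<lambda>n. Q 0 * (1 / b) ^ n) \<longlonglongrightarrow> 0"
    using b by (intro tendsto_mult_right_zero LIMSEQ_power_zero) auto
  then have Q_lim: "Q \<longlonglongrightarrow> 0"
    by (simp only: Q_geom[symmetric])
  define c where "c = 4 * b - a\<^sup>2"
  have c: "c > 0"
    using disc by (simp add: c_def)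
  have Q_split: "4 * Q n = (2 * x n - a * y n)\<^sup>2 + c * (y n)\<^sup>2" for n
    unfolding Q_def c_def by (simp add: power2_eq_square algebra_simps)
  have "y \<longlonglongrightarrow> 0"
  proof (rule tendsto_zero_if_square_le)
    show "(y n)\<^sup>2 \<le> 4 / c * Q n" for n
      using Q_split[of n] c by (simp add: field_simps)
    show "(\<lambda>n. 4 / c * Q n) \<longlonglongrightarrow> 0"
      by (rule tendsto_mult_right_zero[OF Q_lim])
  qed
  moreover have "(\<lambda>n. 2 * x n - a * y n) \<longlonglongrightarrow> 0"
  proof (rule tendsto_zero_if_square_le)
    show "(2 * x n - a * y n)\<^sup>2 \<le> 4 * Q n" for n
      using Q_split[of n] c by simp
    show "(\<lambda>n. 4 * Q n) \<longlonglongrightarrow> 0"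
      by (rule tendsto_mult_right_zero[OF Q_lim])
  qed
  ultimately have "(\<lambda>n. ((2 * x n - a * y n) + a * y n) / 2) \<longlonglongrightarrow> (0 + a * 0) / 2"
    by (intro tendsto_intros) simp_all
  then show ?thesis
    using \<open>y \<longlonglongrightarrow> 0\<close> by simp
qed

text \<open>Real eigenvalue \<open>r\<close>: the coordinate \<open>l = x + ry\<close> is multiplied by \<open>\<plusminus>1/r\<close> at each
  step, and \<open>y\<close> is then controlled through \<open>x = l - ry\<close>.\<close>

lemma gmap_linear_backward_orbit_tendsto_zero_real:
  fixes a b r :: real and x y s :: "nat \<Rightarrow> real"
  assumes root: "r\<^sup>2 + a * r + b = 0" and r: "1 < \<bar>r\<bar>" and rb: "1 + \<bar>r\<bar> < b"
    and s: "\<And>n. \<bar>s n\<bar> = 1"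
    and hx: "\<And>n. x n = - s n * b * y (Suc n)"
    and hy: "\<And>n. y n = s n * (x (Suc n) - a * y (Suc n))"
  shows "x \<longlonglongrightarrow> 0 \<and> y \<longlonglongrightarrow> 0"
proof -
  have b: "b > 0"
    using r rb by linarith
  have b_eq: "b = - r\<^sup>2 - a * r"
    using root by simp
  define l where "l n = x n + r * y n" for n
  define N where "N n = max \<bar>l n\<bar> \<bar>y n\<bar>" for n
  define k where "k = max (1 / \<bar>r\<bar>) ((1 + \<bar>r\<bar>) / b)"
  have k: "0 \<le> k" "k < 1"
    using r rb b by (auto simp: k_def le_max_iff_disj field_simps)
  have x_bound: "\<bar>x n\<bar> \<le> (1 + \<bar>r\<bar>) * N n" for n
  proof -
    have "\<bar>x n\<bar> \<le> \<bar>l n\<bar> + \<bar>r\<bar> * \<bar>y n\<bar>"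
      using abs_triangle_ineq4[of "l n" "r * y n"] by (simp add: l_def abs_mult)
    also have "\<dots> \<le> (1 + \<bar>r\<bar>) * N n"
      unfolding N_def by (simp add: distrib_right mult_left_mono add_mono)
    finally show ?thesis .
  qed
  have N_Suc: "N (Suc n) \<le> k * N n" for n
  proof -
    have "l n = s n * r * l (Suc n)"
      unfolding l_def hx[of n] hy[of n] b_eq by (simp add: power2_eq_square algebra_simps)
    then have "\<bar>l (Suc n)\<bar> = 1 / \<bar>r\<bar> * \<bar>l n\<bar>"
      using r s[of n] by (simp add: abs_mult field_simps)
    also have "\<dots> \<le> k * N n"
      unfolding k_def N_def by (intro mult_mono) (auto simp: le_max_iff_disj)
    finally have l: "\<bar>l (Suc n)\<bar> \<le> k * N n" .
    have "\<bar>y (Suc n)\<bar> = \<bar>x n\<bar> / b"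
      using hx[of n] s[of n] b by (simp add: abs_mult)
    also have "\<dots> \<le> (1 + \<bar>r\<bar>) / b * N n"
      using x_bound[of n] b by (simp add: divide_right_mono)
    also have "\<dots> \<le> k * N n"
      unfolding k_def N_def by (intro mult_right_mono) auto
    finally show ?thesis
      using l by (simp add: N_def)
  qed
  have "N n \<le> k ^ n * N 0" for n
  proof (induction n)
    case (Suc n)
    have "N (Suc n) \<le> k * N n" by (rule N_Suc)
    also have "\<dots> \<le> k * (k ^ n * N 0)" by (rule mult_left_mono[OF Suc k(1)])
    finally show ?case by simp
  qed simp
  moreover have "(\<lambda>n. k ^ n * N 0) \<longlonglongrightarrow> 0"
    using k by (intro tendsto_mult_left_zero LIMSEQ_power_zero) auto
  ultimately have N_lim: "N \<longlonglongrightarrow> 0"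
    by (intro Lim_null_comparison[of N]) (auto simp: N_def)
  have "x \<longlonglongrightarrow> 0"
  proof (rule Lim_null_comparison)
    show "\<forall>\<^sub>F n in sequentially. norm (x n) \<le> (1 + \<bar>r\<bar>) * N n"
      using x_bound by (intro always_eventually) simp
    show "(\<lambda>n. (1 + \<bar>r\<bar>) * N n) \<longlonglongrightarrow> 0"
      by (rule tendsto_mult_right_zero[OF N_lim])
  qed
  moreover have "y \<longlonglongrightarrow> 0"
    by (rule Lim_null_comparison[OF _ N_lim]) (auto simp: N_def)
  ultimately show ?thesis ..
qed

lemma real_root_outside_unit_interval:
  fixes a b :: real
  assumes b: "b \<ge> 3" and ab: "\<bar>a\<bar> \<le> b" and disc: "a\<^sup>2 \<ge> 4 * b"
  obtains r where "r\<^sup>2 + a * r + b = 0" and "1 < \<bar>r\<bar>" and "1 + \<bar>r\<bar> < b"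
proof -
  define q where "q = sqrt (a\<^sup>2 - 4 * b)"
  have q: "q \<ge> 0" "q\<^sup>2 = a\<^sup>2 - 4 * b"
    using disc by (auto simp: q_def)
  have "\<bar>a\<bar> > 3"
  proof (rule ccontr)
    assume "\<not> \<bar>a\<bar> > 3"
    then have "\<bar>a\<bar>\<^sup>2 \<le> 3\<^sup>2" by (intro power_mono) auto
    then show False using b disc by simp
  qed
  then have "q\<^sup>2 < (\<bar>a\<bar> - 2)\<^sup>2"
    using q ab by (simp add: power2_eq_square algebra_simps)
  then have q_less: "q < \<bar>a\<bar> - 2"
    using \<open>\<bar>a\<bar> > 3\<close> q(1) by (smt (verit) power_mono)
  define r where "r = sgn a * (q - \<bar>a\<bar>) / 2"
  have "r\<^sup>2 + a * r + b = 0"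
    using q(2) \<open>\<bar>a\<bar> > 3\<close> by (cases "a \<ge> 0") (simp_all add: r_def power2_eq_square field_simps)
  moreover have "\<bar>r\<bar> = (\<bar>a\<bar> - q) / 2"
    using q_less q(1) \<open>\<bar>a\<bar> > 3\<close> by (auto simp: r_def abs_mult)
  ultimately show ?thesis
    using that q_less q(1) ab by auto
qed

lemma gmap_linear_backward_orbit_tendsto_zero:
  fixes a b :: real and u :: "nat \<Rightarrow> real \<times> real" and s :: "nat \<Rightarrow> real"
  assumes ab: "\<bar>a\<bar> \<le> b" "b \<ge> 3" and s: "\<And>n. \<bar>s n\<bar> = 1"
    and orbit: "\<And>n. gmap_linear a b (u (Suc n)) = s n *\<^sub>R u n"
  shows "u \<longlonglongrightarrow> 0"
proof -
  define x where "x n = fst (u n)" for n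
  define y where "y n = snd (u n)" for n
  have eq_xy: "- b * y (Suc n) = s n * x n \<and> x (Suc n) - a * y (Suc n) = s n * y n" for n
    using orbit[of n] by (cases "u (Suc n)"; cases "u n") (simp add: x_def y_def gmap_linear_def)
  have hx: "x n = - s n * b * y (Suc n)" for n
  proof -
    have "x n = s n * (- b * y (Suc n))"
      unfolding eq_xy[THEN conjunct1] abs_eq_1_mult_cancel[OF s] ..
    then show ?thesis by simp
  qed
  have hy: "y n = s n * (x (Suc n) - a * y (Suc n))" for n
    unfolding eq_xy[THEN conjunct2] abs_eq_1_mult_cancel[OF s] ..
  have "x \<longlonglongrightarrow> 0 \<and> y \<longlonglongrightarrow> 0"
  proof (cases "a\<^sup>2 < 4 * b")
    case True
    then show ?thesis
      using ab by (intro gmap_linear_backward_orbit_tendsto_zero_complex[of b a s x y, OF _ True s hx hy]) simp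
  next
    case False
    obtain r where "r\<^sup>2 + a * r + b = 0" "1 < \<bar>r\<bar>" "1 + \<bar>r\<bar> < b"
      using real_root_outside_unit_interval ab False by (metis linorder_not_less)
    then show ?thesis
      by (rule gmap_linear_backward_orbit_tendsto_zero_real[of r a b s x y, OF _ _ _ s hx hy])
  qed
  then have "(\<lambda>n. (x n, y n)) \<longlonglongrightarrow> (0, 0)"
    by (intro tendsto_Pair) auto
  then show ?thesis
    by (simp add: x_def y_def zero_prod_def)
qed

lemma tile_preimage:
  assumes tile: "is_tile A B T" and B: "B \<noteq> 0"
    and d: "d \<in> digits B" and q: "q \<in> T" and p: "gmap A B p = d q"
  shows "p \<in> T"
proof -
  have "d q \<in> gmap A B ` T"
    using tile d q by (auto simp: is_tile_def)
  then obtain p' where "p' \<in> T" and "gmap A B p' = gmap A B p"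
    using p by auto
  with gmap_inj[OF B] show ?thesis
    by metis
qed

lemma tile_contains_fixed_point:
  assumes tile: "is_tile A B T" and AB: "\<bar>A\<bar> \<le> B" "B \<ge> 3"
    and d: "d \<in> digits B" and p: "gmap A B p = d p"
  shows "p \<in> T"
proof -
  obtain s where s: "\<bar>s\<bar> = 1" and iso: "\<And>u v. d u - d v = s *\<^sub>R (u - v)"
    using digits_isometry[OF d] by blast
  obtain q0 where "q0 \<in> T"
    using tile by (auto simp: is_tile_def)
  define q where "q n = ((gmap_inv A B \<circ> d) ^^ n) q0" for n
  have B: "B \<noteq> 0"
    using AB by simp
  have q_Suc: "gmap A B (q (Suc n)) = d (q n)" for n
    by (simp add: q_def gmap_gmap_inv[OF B])
  have q_in_T: "q n \<in> T" for n
  proof (induction n)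
    case 0
    then show ?case using \<open>q0 \<in> T\<close> by (simp add: q_def)
  next
    case (Suc n)
    then show ?case using tile_preimage[OF tile B d _ q_Suc] by blast
  qed
  have "(\<lambda>n. q n - p) \<longlonglongrightarrow> 0"
  proof (rule gmap_linear_backward_orbit_tendsto_zero)
    show "\<bar>real_of_int A\<bar> \<le> real_of_int B" "real_of_int B \<ge> 3"
      using AB by linarith+
    show "gmap_linear (of_int A) (of_int B) (q (Suc n) - p) = s *\<^sub>R (q n - p)" for n
      by (simp flip: gmap_diff add: q_Suc p iso)
  qed (rule s)
  then have "q \<longlonglongrightarrow> p"
    by (rule LIM_zero_cancel)
  moreover have "closed T"
    using tile by (simp add: is_tile_def compact_imp_closed)
  ultimately show ?thesis
    using closed_sequentially q_in_T by blast
qed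

lemma tile_symmetric_point_B_ge_4:
  assumes tile: "is_tile A B T" and AB: "\<bar>A\<bar> \<le> B" "B \<ge> 4"
  obtains p where "p \<in> T" "- p \<in> T" "p \<noteq> 0"
proof -
  have den: "1 + real_of_int A + real_of_int B > 0"
    using AB by linarith
  define y :: real where "y = (of_int B - 3) / (2 * (1 + of_int A + of_int B))"
  define p where "p = ((1 + of_int A) * y, y)"
  have key: "(1 + of_int A + of_int B) * y = (of_int B - 3) / 2"
    using den by (simp add: y_def field_simps)
  have "gmap A B p = (tr_a ^^ 1) p"
    using key by (simp add: p_def gmap_def tr_a_def algebra_simps)
  then have "p \<in> T"
    using AB by (intro tile_contains_fixed_point[OF tile _ _ tr_a_pow_in_digits[of 1]]) auto
  have "gmap A B (- p) = (tr_a ^^ nat (B - 2)) (- p)"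
    using key AB by (simp add: p_def gmap_def tr_a_pow field_simps)
  then have "- p \<in> T"
    using AB
    by (intro tile_contains_fixed_point[OF tile _ _ tr_a_pow_in_digits[of "nat (B - 2)"]]) auto
  moreover have "p \<noteq> 0"
    using AB den by (simp add: p_def y_def zero_prod_def)
  ultimately show ?thesis
    using \<open>p \<in> T\<close> that by blast
qed

lemma tile_points_A3_B3:
  assumes tile: "is_tile 3 3 T"
  shows "(1/3, 0) \<in> T" and "(-1/3, 0) \<in> T"
proof -
  have fixed: "p \<in> T" if "d \<in> digits 3" "gmap 3 3 p = d p" for d p
    using tile_contains_fixed_point[OF tile _ _ that] by simp
  have pre: "p \<in> T" if "d \<in> digits 3" "q \<in> T" "gmap 3 3 p = d q" for d p q
    using tile_preimage[OF tile _ that] by simp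
  have d_id: "tr_a ^^ 0 \<in> digits 3" and d_a: "tr_a ^^ 1 \<in> digits 3"
    by (rule tr_a_pow_in_digits, simp)+
  have "(0, 0) \<in> T" by (rule fixed[OF d_a]) (simp add: gmap_def tr_a_def)
  then have "(1, 1/3) \<in> T" by (rule pre[OF d_id]) (simp add: gmap_def)
  then show "(1/3, 0) \<in> T" by (rule pre[OF d_id]) (simp add: gmap_def)
  have "(2, 1) \<in> T" by (rule fixed[OF rot_c_in_digits]) (simp add: gmap_def rot_c_def)
  then have "(0, -1/3) \<in> T" by (rule pre[OF d_id]) (simp add: gmap_def)
  then show "(-1/3, 0) \<in> T" by (rule pre[OF d_a]) (simp add: gmap_def tr_a_def)
qed

lemma tile_points_Am3_B3:
  assumes tile: "is_tile (-3) 3 T"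
  shows "(0, 1/9) \<in> T" and "(0, -1/9) \<in> T"
proof -
  have fixed: "p \<in> T" if "d \<in> digits 3" "gmap (-3) 3 p = d p" for d p
    using tile_contains_fixed_point[OF tile _ _ that] by simp
  have pre: "p \<in> T" if "d \<in> digits 3" "q \<in> T" "gmap (-3) 3 p = d q" for d p q
    using tile_preimage[OF tile _ that] by simp
  have d_id: "tr_a ^^ 0 \<in> digits 3" and d_a: "tr_a ^^ 1 \<in> digits 3"
    by (rule tr_a_pow_in_digits, simp)+
  have P: "(-2, 1) \<in> T" by (rule fixed[OF d_id]) (simp add: gmap_def)
  then have "(-1, 2/3) \<in> T" by (rule pre[OF d_a]) (simp add: gmap_def tr_a_def)
  then have "(-1/3, 1/3) \<in> T" by (rule pre[OF d_a]) (simp add: gmap_def tr_a_def)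
  then show "(0, 1/9) \<in> T" by (rule pre[OF d_a]) (simp add: gmap_def tr_a_def)
  from P have "(0, -1/3) \<in> T" by (rule pre[OF rot_c_in_digits]) (simp add: gmap_def rot_c_def)
  then have "(-4/3, 1/3) \<in> T" by (rule pre[OF d_id]) (simp add: gmap_def)
  then show "(0, -1/9) \<in> T" by (rule pre[OF rot_c_in_digits]) (simp add: gmap_def rot_c_def)
qed

lemma symmetric_pair_in_tile_inter_rot_c:
  assumes "p \<in> T" and "- p \<in> T" and "p \<noteq> 0"
  shows "\<exists>p q. p \<noteq> q \<and> p \<in> T \<inter> rot_c ` T \<and> q \<in> T \<inter> rot_c ` T"
proof -
  have "p \<in> rot_c ` T"
    using image_eqI[of p rot_c "- p"] assms(2) by (simp add: rot_c_eq_uminus)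
  moreover have "- p \<in> rot_c ` T"
    using image_eqI[of "- p" rot_c p] assms(1) by (simp add: rot_c_eq_uminus)
  moreover have "p \<noteq> - p"
    using assms(3) by (cases p) (auto simp: zero_prod_def)
  ultimately show ?thesis
    using assms(1,2) by blast
qed

theorem lemma7p1:
  fixes A B :: int and T :: "(real \<times> real) set"
  assumes "\<bar>A\<bar> \<le> B" and "2 * \<bar>A\<bar> \<ge> B + 3"
    and "is_tile A B T"
  shows "\<exists>p q. p \<noteq> q \<and> p \<in> T \<inter> rot_c ` T \<and> q \<in> T \<inter> rot_c ` T"
proof -
  consider "B \<ge> 4" | "A = 3" "B = 3" | "A = -3" "B = 3"
    using assms(1,2) by linarith
  then show ?thesis
  proof cases
    case 1
    then obtain p where "p \<in> T" "- p \<in> T" "p \<noteq> 0"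
      using tile_symmetric_point_B_ge_4 assms(1,3) by blast
    then show ?thesis by (rule symmetric_pair_in_tile_inter_rot_c)
  next
    case 2
    then show ?thesis
      using tile_points_A3_B3 assms(3)
      by (intro symmetric_pair_in_tile_inter_rot_c[of "(1/3, 0)"]) (auto simp: zero_prod_def)
  next
    case 3
    then show ?thesis
      using tile_points_Am3_B3 assms(3)
      by (intro symmetric_pair_in_tile_inter_rot_c[of "(0, 1/9)"]) (auto simp: zero_prod_def)
  qed
qed

end
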